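(* Let $\langle B,\wedge,{}'\rangle$ be an algebra with $\wedge$ binary and ${}'$ unary satisfying $x\wedge y\approx y\wedge x$, $x\wedge(y\wedge z)\approx(x\wedge y)\wedge z$, $x''\approx x$, and $x'\approx (x\wedge y)'\wedge(x\wedge y')'$. Then for all $x,y\in B$: $x\wedge(x\wedge y')'=y\wedge(y\wedge x')'$. *)

theory Defs
  imports Main
begin

end

theory Submission
  imports Defs
begin

locale robbins_algebra = abel_semigroup meet
  for meet :: "'a \<Rightarrow> 'a \<Rightarrow> 'a" (infixl \<open>\<sqinter>\<close> 70) +
  fixes cpl :: "'a \<Rightarrow> 'a"
  assumes cpl_cpl: "cpl (cpl x) = x"
    and robbins: "cpl x = cpl (x \<sqinter> y) \<sqinter> cpl (x \<sqinter> cpl y)"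
begin

lemma robbins_dual: "x = cpl (cpl x \<sqinter> cpl y) \<sqinter> cpl (cpl x \<sqinter> y)"
  using robbins[of "cpl x" "cpl y"] by (simp only: cpl_cpl)

lemma meet_cpl_meet_cpl_commute: "x \<sqinter> cpl (x \<sqinter> cpl y) = y \<sqinter> cpl (y \<sqinter> cpl x)"
proof -
  have "x \<sqinter> cpl (x \<sqinter> cpl y) = cpl (cpl x \<sqinter> cpl y) \<sqinter> cpl (cpl x \<sqinter> y) \<sqinter> cpl (x \<sqinter> cpl y)"
    by (simp only: robbins_dual[of x y, symmetric])
  also have "\<dots> = cpl (cpl y \<sqinter> cpl x) \<sqinter> cpl (cpl y \<sqinter> x) \<sqinter> cpl (y \<sqinter> cpl x)"
    by (simp only: assoc commute left_commute)
  also have "\<dots> = y \<sqinter> cpl (y \<sqinter> cpl x)"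
    by (simp only: robbins_dual[of y x, symmetric])
  finally show ?thesis .
qed

end

theorem lemma2p3:
  fixes meet :: "'b \<Rightarrow> 'b \<Rightarrow> 'b" and cpl :: "'b \<Rightarrow> 'b"
  assumes comm: "\<And>x y. meet x y = meet y x"
    and assoc: "\<And>x y z. meet x (meet y z) = meet (meet x y) z"
    and invol: "\<And>x. cpl (cpl x) = x"
    and rob: "\<And>x y. cpl x = meet (cpl (meet x y)) (cpl (meet x (cpl y)))"
  shows "\<And>x y. meet x (cpl (meet x (cpl y))) = meet y (cpl (meet y (cpl x)))"
proof -
  interpret robbins_algebra meet cpl
    by unfold_locales (simp only: assoc, fact comm, fact invol, fact rob)
  show "\<And>x y. meet x (cpl (meet x (cpl y))) = meet y (cpl (meet y (cpl x)))"
    by (rule meet_cpl_meet_cpl_commute)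
qed

end
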